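(* Let $\phi,\alpha\in[0,\pi/2]$, $\beta\in[0,2\pi]$, and let $|\psi_1\rangle=\frac{1}{\sqrt2}(|00\rangle+|11\rangle)$ and $|\psi_2\rangle=\cos\phi(\cos\alpha|01\rangle+\sin\alpha|10\rangle)+e^{i\beta}\frac{\sin\phi}{\sqrt2}(|00\rangle-|11\rangle)$. Then there exist single-qubit unitaries $\mathcal V_a,\mathcal V_b$, a real phase $\zeta$ and an angle $\theta'\in[0,\pi/2]$ such that $(\mathcal V_a\otimes\mathcal V_b)|\psi_1\rangle=\frac{1}{\sqrt2}(|01\rangle+|10\rangle)$ and $(\mathcal V_a\otimes\mathcal V_b)|\psi_2\rangle=e^{i\zeta}(\cos\theta'|00\rangle+\sin\theta'|11\rangle)$, where $\sin2\theta'=\left|e^{2i\beta}\sin^2\phi+\cos^2\phi\sin2\alpha\right|$. Consequently, for any $\nu_1,\nu_2\in[0,1]$ with $\nu_1+\nu_2=1$, the state $\nu_1|\psi_1\rangle\langle\psi_1|+\nu_2|\psi_2\rangle\langle\psi_2|$ is locally unitarily equivalent to $\nu_2|\psi_1'\rangle\langle\psi_1'|+\nu_1|\psi_2'\rangle\langle\psi_2'|$ with $|\psi_1'\rangle=\cos\theta'|00\rangle+\sin\theta'|11\rangle$ and $|\psi_2'\rangle=\frac1{\sqrt2}(|01\rangle+|10\rangle)$.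
   Context: Qubits are labelled so that the first tensor factor belongs to Alice and the second to Bob; $\{|0\rangle,|1\rangle\}$ is the computational basis and $|ij\rangle=|i\rangle\otimes|j\rangle$. *)

theory Defs
  imports "HOL-Analysis.Analysis" "HOL-Library.Numeral_Type"
begin

text \<open>Two-qubit states are functions on 2 \<times> 2, the first
  component being Alice's qubit: psi (i,j) is the coefficient of |ij>.\<close>

type_synonym qop = "2 \<Rightarrow> 2 \<Rightarrow> complex"
type_synonym state2 = "2 \<times> 2 \<Rightarrow> complex"
type_synonym op2 = "2 \<times> 2 \<Rightarrow> 2 \<times> 2 \<Rightarrow> complex"

definition unitary1 :: "qop \<Rightarrow> bool" where
  "unitary1 U \<longleftrightarrow>
     (\<forall>i j. (\<Sum>k\<in>UNIV. U i k * cnj (U j k)) = (if i = j then 1 else 0)) \<and>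
     (\<forall>i j. (\<Sum>k\<in>UNIV. cnj (U k i) * U k j) = (if i = j then 1 else 0))"

definition ket2 :: "2 \<Rightarrow> 2 \<Rightarrow> state2" where
  "ket2 i j = (\<lambda>p. if p = (i, j) then 1 else 0)"

definition tensor :: "qop \<Rightarrow> qop \<Rightarrow> op2" where
  "tensor A B = (\<lambda>(i, j) (k, l). A i k * B j l)"

definition apply_op :: "op2 \<Rightarrow> state2 \<Rightarrow> state2" where
  "apply_op M v = (\<lambda>p. \<Sum>q\<in>UNIV. M p q * v q)"

definition mat_mult2 :: "op2 \<Rightarrow> op2 \<Rightarrow> op2" where
  "mat_mult2 M N = (\<lambda>p r. \<Sum>q\<in>UNIV. M p q * N q r)"

definition adjoint2 :: "op2 \<Rightarrow> op2" where
  "adjoint2 M = (\<lambda>p q. cnj (M q p))"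

definition projector :: "state2 \<Rightarrow> op2" where
  "projector v = (\<lambda>p q. v p * cnj (v q))"

definition add_op :: "op2 \<Rightarrow> op2 \<Rightarrow> op2" where
  "add_op M N = (\<lambda>p q. M p q + N p q)"

definition scale_op :: "real \<Rightarrow> op2 \<Rightarrow> op2" where
  "scale_op c M = (\<lambda>p q. complex_of_real c * M p q)"

definition add_st :: "state2 \<Rightarrow> state2 \<Rightarrow> state2" where
  "add_st v w = (\<lambda>p. v p + w p)"

definition scale_st :: "complex \<Rightarrow> state2 \<Rightarrow> state2" where
  "scale_st c v = (\<lambda>p. c * v p)"

definition loc_unitary_equiv :: "op2 \<Rightarrow> op2 \<Rightarrow> bool" where
  "loc_unitary_equiv rho rho2 \<longleftrightarrow>
     (\<exists>Ua Ub. unitary1 Ua \<and> unitary1 Ub \<and>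
        mat_mult2 (mat_mult2 (tensor Ua Ub) rho) (adjoint2 (tensor Ua Ub)) = rho2)"

end

theory Submission
  imports Defs
begin

text \<open>
  Identify a two-qubit state with its coefficient matrix M, so that Va \<otimes> Vb acts as
  M \<mapsto> Va M Vb^T. The Bell state \<psi>1 has M = I / sqrt 2, while \<psi>2 has the traceless matrix
  [[p, q], [r, -p]]. Taking Vb^T = Va^\<dagger> X, with X the bit flip, sends \<psi>1 to
  (|01> + |10>) / sqrt 2 and \<psi>2 to Va M Va^\<dagger> X. A traceless 2x2 matrix is unitarily
  similar to one with zero diagonal, because 0 lies in its numerical range; the remaining
  off-diagonal entries A, B satisfy A B = - det M = p^2 + q r and |A|^2 + |B|^2 = |M|^2 = 1,
  and a diagonal phase in Va gives A and B the same argument. Hence \<psi>2 goes to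
  e^(i \<zeta>) (cos \<theta>' |00> + sin \<theta>' |11>) with sin 2\<theta>' = 2 |A| |B| = 2 |p^2 + q r|.
\<close>

lemma qubit_cases: "(i :: 2) = 0 \<or> i = 1"
proof (induct i)
  case (of_int z)
  then have "z = 0 \<or> z = 1"
    by auto
  then show ?case
    by auto
qed

lemma UNIV_qubit: "(UNIV :: 2 set) = {0, 1}"
  using qubit_cases by auto

lemma forall_qubit: "(\<forall>i::2. P i) \<longleftrightarrow> P 0 \<and> P 1"
  by (metis qubit_cases)

lemma sum_qubit: "(\<Sum>i\<in>UNIV. f i) = f (0::2) + f 1"
  by (simp add: UNIV_qubit)

lemma sum_qubit_pair:
  "(\<Sum>k\<in>UNIV. f k) = f (0::2, 0::2) + f (0, 1) + f (1, 0) + f (1, 1)"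
  by (simp add: UNIV_Times_UNIV[symmetric] UNIV_qubit add.assoc del: UNIV_Times_UNIV)

definition qop_of :: "complex \<Rightarrow> complex \<Rightarrow> complex \<Rightarrow> complex \<Rightarrow> qop" where
  "qop_of a b c d = (\<lambda>i j. if i = 0 then if j = 0 then a else b else if j = 0 then c else d)"

definition state2_of :: "complex \<Rightarrow> complex \<Rightarrow> complex \<Rightarrow> complex \<Rightarrow> state2" where
  "state2_of c00 c01 c10 c11 = (\<lambda>(i, j). qop_of c00 c01 c10 c11 i j)"

lemma qop_of_simps [simp]:
  "qop_of a b c d 0 0 = a" "qop_of a b c d 0 1 = b" "qop_of a b c d 1 0 = c" "qop_of a b c d 1 1 = d"
  by (simp_all add: qop_of_def)

lemma state2_of_simps [simp]:
  "state2_of a b c d (0, 0) = a" "state2_of a b c d (0, 1) = b"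
  "state2_of a b c d (1, 0) = c" "state2_of a b c d (1, 1) = d"
  by (simp_all add: state2_of_def)

lemma state2_eqI:
  fixes v w :: state2
  assumes "v (0, 0) = w (0, 0)" "v (0, 1) = w (0, 1)" "v (1, 0) = w (1, 0)" "v (1, 1) = w (1, 1)"
  shows "v = w"
proof
  fix k :: "2 \<times> 2"
  show "v k = w k"
    using assms qubit_cases[of "fst k"] qubit_cases[of "snd k"] by (cases k) auto
qed

lemma ket2_state2_of [simp]:
  "ket2 0 0 = state2_of 1 0 0 0" "ket2 0 1 = state2_of 0 1 0 0"
  "ket2 1 0 = state2_of 0 0 1 0" "ket2 1 1 = state2_of 0 0 0 1"
  by (rule state2_eqI; simp add: ket2_def)+

lemma scale_st_state2_of [simp]:
  "scale_st c (state2_of a b d e) = state2_of (c * a) (c * b) (c * d) (c * e)"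
  by (rule state2_eqI) (simp_all add: scale_st_def)

lemma add_st_state2_of [simp]:
  "add_st (state2_of a b c d) (state2_of a' b' c' d') = state2_of (a + a') (b + b') (c + c') (d + d')"
  by (rule state2_eqI) (simp_all add: add_st_def)

lemma apply_tensor_qop_of:
  "apply_op (tensor (qop_of a00 a01 a10 a11) (qop_of b00 b01 b10 b11)) (state2_of m00 m01 m10 m11) =
   state2_of (a00 * (b00 * m00 + b01 * m01) + a01 * (b00 * m10 + b01 * m11))
             (a00 * (b10 * m00 + b11 * m01) + a01 * (b10 * m10 + b11 * m11))
             (a10 * (b00 * m00 + b01 * m01) + a11 * (b00 * m10 + b01 * m11))
             (a10 * (b10 * m00 + b11 * m01) + a11 * (b10 * m10 + b11 * m11))"
  by (rule state2_eqI) (simp_all add: apply_op_def tensor_def sum_qubit_pair algebra_simps)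

lemma unitary1_qop_of:
  assumes "a * cnj a + b * cnj b = 1" "c * cnj c + d * cnj d = 1" "a * cnj c + b * cnj d = 0"
    and "cnj a * a + cnj c * c = 1" "cnj b * b + cnj d * d = 1" "cnj a * b + cnj c * d = 0"
  shows "unitary1 (qop_of a b c d)"
proof -
  have "c * cnj a + d * cnj b = 0" "cnj b * a + cnj d * c = 0"
    using arg_cong[OF assms(3), of cnj] arg_cong[OF assms(6), of cnj] by (simp_all add: mult.commute)
  then show ?thesis
    using assms unfolding unitary1_def forall_qubit sum_qubit by simp
qed

lemma conjugate_projector:
  "mat_mult2 (mat_mult2 W (projector v)) (adjoint2 W) = projector (apply_op W v)"
  unfolding mat_mult2_def projector_def adjoint2_def apply_op_def
  by (intro ext) (simp add: sum_distrib_left sum_distrib_right mult_ac)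

lemma conjugate_add_op:
  "mat_mult2 (mat_mult2 W (add_op A B)) (adjoint2 W) =
   add_op (mat_mult2 (mat_mult2 W A) (adjoint2 W)) (mat_mult2 (mat_mult2 W B) (adjoint2 W))"
  unfolding mat_mult2_def add_op_def
  by (intro ext) (simp add: algebra_simps sum.distrib)

lemma conjugate_scale_op:
  "mat_mult2 (mat_mult2 W (scale_op c A)) (adjoint2 W) = scale_op c (mat_mult2 (mat_mult2 W A) (adjoint2 W))"
  unfolding mat_mult2_def scale_op_def
  by (intro ext) (simp add: sum_distrib_left sum_distrib_right mult_ac)

lemma projector_scale_st_unimodular:
  "c * cnj c = 1 \<Longrightarrow> projector (scale_st c v) = projector v"
  unfolding projector_def scale_st_def by (intro ext) (simp add: algebra_simps)

lemma loc_unitary_equiv_mixture: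
  assumes "unitary1 Va" "unitary1 Vb"
    and "apply_op (tensor Va Vb) \<psi>1 = \<chi>1"
    and "apply_op (tensor Va Vb) \<psi>2 = scale_st c \<chi>2" "c * cnj c = 1"
  shows "loc_unitary_equiv (add_op (scale_op \<nu>1 (projector \<psi>1)) (scale_op \<nu>2 (projector \<psi>2)))
           (add_op (scale_op \<nu>2 (projector \<chi>2)) (scale_op \<nu>1 (projector \<chi>1)))"
proof -
  have "add_op (scale_op \<nu>1 (projector \<chi>1)) (scale_op \<nu>2 (projector \<chi>2)) =
        add_op (scale_op \<nu>2 (projector \<chi>2)) (scale_op \<nu>1 (projector \<chi>1))"
    unfolding add_op_def by (simp add: add.commute)
  then show ?thesis
    unfolding loc_unitary_equiv_def using assms
    by (intro exI[of _ Va] exI[of _ Vb])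
      (simp add: conjugate_add_op conjugate_scale_op conjugate_projector projector_scale_st_unimodular)
qed

text \<open>For U = [[cnj a, cnj b], [-b, a]] and M = [[p, q], [r, -p]] these are the entries
  (0,0), (0,1) and (1,0) of U M U^\<dagger>.\<close>

definition rotated_diag :: "complex \<Rightarrow> complex \<Rightarrow> complex \<Rightarrow> complex \<Rightarrow> complex \<Rightarrow> complex" where
  "rotated_diag a b p q r = p * (a * cnj a - b * cnj b) + q * cnj a * b + r * cnj b * a"

definition rotated_upper :: "complex \<Rightarrow> complex \<Rightarrow> complex \<Rightarrow> complex \<Rightarrow> complex \<Rightarrow> complex" where
  "rotated_upper a b p q r = q * cnj a ^ 2 - r * cnj b ^ 2 - 2 * p * cnj a * cnj b"

definition rotated_lower :: "complex \<Rightarrow> complex \<Rightarrow> complex \<Rightarrow> complex \<Rightarrow> complex \<Rightarrow> complex" where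
  "rotated_lower a b p q r = r * a ^ 2 - q * b ^ 2 - 2 * p * a * b"

lemma unimodular_Im_zero:
  fixes u w :: complex
  obtains e where "e * cnj e = 1" "Im (u * e + w * cnj e) = 0"
proof -
  define C where "C = Im u + Im w"
  define D where "D = Re u - Re w"
  have Im_lin: "Im (u * e + w * cnj e) = C * Re e + D * Im e" for e
    by (simp add: C_def D_def algebra_simps)
  show ?thesis
  proof (cases "C = 0 \<and> D = 0")
    case True
    then show ?thesis
      by (intro that[of 1]) (simp_all add: C_def)
  next
    case False
    define n where "n = sqrt (C\<^sup>2 + D\<^sup>2)"
    have "C\<^sup>2 + D\<^sup>2 > 0"
      using False by (simp add: sum_power2_gt_zero_iff)
    then have "n > 0" "n\<^sup>2 = C\<^sup>2 + D\<^sup>2"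
      by (simp_all add: n_def)
    define e where "e = Complex (D / n) (- C / n)"
    have "e * cnj e = 1"
      using False \<open>n > 0\<close> \<open>n\<^sup>2 = C\<^sup>2 + D\<^sup>2\<close>
      by (simp add: e_def complex_eq_iff power2_eq_square add_divide_distrib[symmetric] add.commute)
    moreover have "Im (u * e + w * cnj e) = 0"
      unfolding Im_lin by (simp add: e_def algebra_simps)
    ultimately show ?thesis
      by (rule that)
  qed
qed

lemma rotated_diag_normalize:
  assumes "rotated_diag a b p q r = 0" "(a, b) \<noteq> (0, 0)"
  obtains a' b' where "a' * cnj a' + b' * cnj b' = 1" "rotated_diag a' b' p q r = 0"
proof -
  define n where "n = (cmod a)\<^sup>2 + (cmod b)\<^sup>2"
  have "n > 0"
    using assms(2) by (simp add: n_def sum_power2_gt_zero_iff)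
  have n: "a * cnj a + b * cnj b = of_real n"
    by (simp only: n_def of_real_add complex_norm_square)
  define c where "c = complex_of_real (1 / sqrt n)"
  have "1 / sqrt n * (1 / sqrt n) = 1 / n"
    using \<open>n > 0\<close> by simp
  then have c: "c * cnj c = 1 / of_real n"
    unfolding c_def complex_cnj_complex_of_real by (metis of_real_1 of_real_divide of_real_mult)
  show ?thesis
  proof (rule that[of "c * a" "c * b"])
    have "c * a * cnj (c * a) + c * b * cnj (c * b) = c * cnj c * (a * cnj a + b * cnj b)"
      by (simp add: algebra_simps)
    then show "c * a * cnj (c * a) + c * b * cnj (c * b) = 1"
      using \<open>n > 0\<close> by (simp add: c n)
    have "rotated_diag (c * a) (c * b) p q r = c * cnj c * rotated_diag a b p q r"
      by (simp add: rotated_diag_def algebra_simps)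
    then show "rotated_diag (c * a) (c * b) p q r = 0"
      using assms(1) by simp
  qed
qed

lemma traceless_numerical_range_zero:
  fixes p q r :: complex
  obtains a b where "a * cnj a + b * cnj b = 1" "rotated_diag a b p q r = 0"
proof (cases "p = 0")
  case True
  then show ?thesis
    by (intro that[of 1 0]) (simp_all add: rotated_diag_def)
next
  case False
  txt \<open>Take a = x real and b = e unimodular: choosing the phase e makes q e + r (cnj e) a real
    multiple t p of p, which leaves the real equation x^2 + t x = 1.\<close>
  obtain e where e: "e * cnj e = 1" and real: "Im (cnj p * q * e + cnj p * r * cnj e) = 0"
    using unimodular_Im_zero .
  define g where "g = q * e + r * cnj e"
  define t where "t = Re (cnj p * g) / (cmod p)\<^sup>2"
  have "cnj p * g = of_real (Re (cnj p * g))"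
    using real by (simp add: g_def complex_eq_iff algebra_simps)
  then have "of_real ((cmod p)\<^sup>2) * g = of_real (Re (cnj p * g)) * p"
    by (metis complex_norm_square mult.assoc mult.commute)
  then have g: "g = of_real t * p"
    using False by (simp add: t_def field_simps del: of_real_power)
  define x where "x = (sqrt (t\<^sup>2 + 4) - t) / 2"
  have x: "x\<^sup>2 + t * x = 1"
  proof -
    have "(sqrt (t\<^sup>2 + 4))\<^sup>2 = t\<^sup>2 + 4"
      by simp
    then show ?thesis
      by (simp add: x_def power2_eq_square field_simps)
  qed
  have "rotated_diag (of_real x) e p q r = p * (of_real x * of_real x - e * cnj e) + of_real x * g"
    by (simp add: rotated_diag_def g_def algebra_simps)
  also have "\<dots> = p * of_real (x\<^sup>2 + t * x - 1)"
    by (simp add: e g power2_eq_square algebra_simps)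
  also have "\<dots> = 0"
    by (simp add: x)
  finally have "rotated_diag (of_real x) e p q r = 0" .
  moreover have "(complex_of_real x, e) \<noteq> (0, 0)"
    using e by auto
  ultimately show ?thesis
    by (rule rotated_diag_normalize) (rule that)
qed

lemma rotated_upper_mult_lower:
  assumes "a * cnj a + b * cnj b = 1" "rotated_diag a b p q r = 0"
  shows "rotated_upper a b p q r * rotated_lower a b p q r = p\<^sup>2 + q * r"
  using assms unfolding rotated_diag_def rotated_upper_def rotated_lower_def by algebra

lemma rotated_offdiag_norm:
  assumes "a * cnj a + b * cnj b = 1" "rotated_diag a b p q r = 0"
  shows "(cmod (rotated_upper a b p q r))\<^sup>2 + (cmod (rotated_lower a b p q r))\<^sup>2 =
    2 * (cmod p)\<^sup>2 + (cmod q)\<^sup>2 + (cmod r)\<^sup>2"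
proof -
  define A B where "A = rotated_upper a b p q r" and "B = rotated_lower a b p q r"
  have "cnj (rotated_diag a b p q r) = 0"
    using assms(2) by simp
  then have "A * cnj A + B * cnj B = 2 * p * cnj p + q * cnj q + r * cnj r"
    using assms unfolding A_def B_def rotated_diag_def rotated_upper_def rotated_lower_def by simp algebra
  then have "complex_of_real ((cmod A)\<^sup>2 + (cmod B)\<^sup>2) = of_real (2 * (cmod p)\<^sup>2 + (cmod q)\<^sup>2 + (cmod r)\<^sup>2)"
    by (simp only: of_real_add of_real_mult of_real_numeral complex_norm_square mult.assoc)
  then show ?thesis
    unfolding A_def B_def of_real_eq_iff .
qed

definition alice_unitary :: "complex \<Rightarrow> complex \<Rightarrow> complex \<Rightarrow> qop" where
  "alice_unitary a b e = qop_of (cnj a) (cnj b) (- e * b) (e * a)"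

text \<open>Bob's matrix is the complex conjugate of Alice's with its rows swapped, i.e.
  Vb^T = Va^\<dagger> X; this is what turns |00> + |11> into |01> + |10>.\<close>

definition bob_unitary :: "complex \<Rightarrow> complex \<Rightarrow> complex \<Rightarrow> qop" where
  "bob_unitary a b e = qop_of (- cnj e * cnj b) (cnj e * cnj a) a b"

context
  fixes a b e :: complex
  assumes unit: "a * cnj a + b * cnj b = 1" and phase: "e * cnj e = 1"
begin

lemma unitary1_alice_unitary: "unitary1 (alice_unitary a b e)"
  unfolding alice_unitary_def
  by (rule unitary1_qop_of) (use unit phase in \<open>simp_all add: algebra_simps\<close>)

lemma unitary1_bob_unitary: "unitary1 (bob_unitary a b e)"
  unfolding bob_unitary_def
  by (rule unitary1_qop_of) (use unit phase in \<open>simp_all add: algebra_simps\<close>)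

lemma tensor_alice_bob_bell:
  "apply_op (tensor (alice_unitary a b e) (bob_unitary a b e)) (state2_of s 0 0 s) = state2_of 0 s s 0"
  unfolding alice_unitary_def bob_unitary_def apply_tensor_qop_of
  using unit phase by (intro arg_cong4[where f = state2_of]) (simp add: algebra_simps | algebra)+

end

lemma tensor_alice_bob_traceless:
  assumes "rotated_diag a b p q r = 0"
  shows "apply_op (tensor (alice_unitary a b e) (bob_unitary a b e)) (state2_of p q r (- p)) =
    state2_of (cnj e * rotated_upper a b p q r) 0 0 (e * rotated_lower a b p q r)"
  unfolding alice_unitary_def bob_unitary_def apply_tensor_qop_of
  using assms unfolding rotated_diag_def rotated_upper_def rotated_lower_def
  by (intro arg_cong4[where f = state2_of]) (simp add: algebra_simps power2_eq_square | algebra)+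

lemma unimodular_common_arg:
  fixes A B :: complex
  obtains e \<zeta> where "e * cnj e = 1" "cnj e * A = cis \<zeta> * cmod A" "e * B = cis \<zeta> * cmod B"
proof -
  define e where "e = cis ((Arg A - Arg B) / 2)"
  define \<zeta> where "\<zeta> = (Arg A + Arg B) / 2"
  have polar: "z = cis (Arg z) * of_real (cmod z)" for z
    using rcis_cmod_Arg[of z] by (simp add: rcis_def mult.commute)
  have "cnj e * A = cis (- ((Arg A - Arg B) / 2)) * cis (Arg A) * cmod A"
    unfolding e_def cis_cnj using polar[of A] by (metis mult.assoc)
  also have "\<dots> = cis \<zeta> * cmod A"
    unfolding cis_mult by (simp add: \<zeta>_def field_simps)
  finally have A: "cnj e * A = cis \<zeta> * cmod A" .
  have "e * B = cis ((Arg A - Arg B) / 2) * cis (Arg B) * cmod B"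
    unfolding e_def using polar[of B] by (metis mult.assoc)
  also have "\<dots> = cis \<zeta> * cmod B"
    unfolding cis_mult by (simp add: \<zeta>_def field_simps)
  finally have B: "e * B = cis \<zeta> * cmod B" .
  have "e * cnj e = 1"
    by (simp add: e_def cis_cnj cis_mult)
  then show ?thesis
    using A B by (rule that)
qed

lemma traceless_state_normal_form:
  fixes p q r s :: complex
  assumes "2 * (cmod p)\<^sup>2 + (cmod q)\<^sup>2 + (cmod r)\<^sup>2 = 1"
  obtains Va Vb \<theta> \<zeta> where "unitary1 Va" "unitary1 Vb" "0 \<le> \<theta>" "\<theta> \<le> pi / 2"
    "sin (2 * \<theta>) = 2 * cmod (p\<^sup>2 + q * r)"
    "apply_op (tensor Va Vb) (state2_of s 0 0 s) = state2_of 0 s s 0"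
    "apply_op (tensor Va Vb) (state2_of p q r (- p)) = state2_of (cis \<zeta> * cos \<theta>) 0 0 (cis \<zeta> * sin \<theta>)"
proof -
  obtain a b where unit: "a * cnj a + b * cnj b = 1" and diag: "rotated_diag a b p q r = 0"
    by (rule traceless_numerical_range_zero)
  define A B where "A = rotated_upper a b p q r" and "B = rotated_lower a b p q r"
  have "(cmod A)\<^sup>2 + (cmod B)\<^sup>2 = 1"
    using rotated_offdiag_norm[OF unit diag] assms by (simp add: A_def B_def)
  then obtain \<theta> where "0 \<le> \<theta>" "\<theta> \<le> pi / 2" and cos: "cmod A = cos \<theta>" and sin: "cmod B = sin \<theta>"
    using sincos_total_pi_half[of "cmod A" "cmod B"] by auto
  have "sin (2 * \<theta>) = 2 * cmod (A * B)"
    by (simp add: sin_double norm_mult cos sin)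
  also have "A * B = p\<^sup>2 + q * r"
    unfolding A_def B_def using unit diag by (rule rotated_upper_mult_lower)
  finally have sin2: "sin (2 * \<theta>) = 2 * cmod (p\<^sup>2 + q * r)" .
  obtain e \<zeta> where phase: "e * cnj e = 1"
    and A': "cnj e * A = cis \<zeta> * cos \<theta>" and B': "e * B = cis \<zeta> * sin \<theta>"
    unfolding cos[symmetric] sin[symmetric] by (rule unimodular_common_arg)
  show ?thesis
  proof (rule that[of "alice_unitary a b e" "bob_unitary a b e" \<theta> \<zeta>])
    show "apply_op (tensor (alice_unitary a b e) (bob_unitary a b e)) (state2_of p q r (- p)) =
        state2_of (cis \<zeta> * cos \<theta>) 0 0 (cis \<zeta> * sin \<theta>)"
      using tensor_alice_bob_traceless[OF diag] by (simp flip: A_def B_def A' B')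
  qed (use unit phase \<open>0 \<le> \<theta>\<close> \<open>\<theta> \<le> pi / 2\<close> sin2 in
       \<open>simp_all add: unitary1_alice_unitary unitary1_bob_unitary tensor_alice_bob_bell\<close>)
qed

lemma psi2_coefficients:
  fixes \<phi> \<alpha> \<beta> :: real
  defines "p \<equiv> exp (\<i> * \<beta>) * sin \<phi> / sqrt 2"
    and "q \<equiv> complex_of_real (cos \<phi> * cos \<alpha>)" and "r \<equiv> complex_of_real (cos \<phi> * sin \<alpha>)"
  shows "2 * (cmod p)\<^sup>2 + (cmod q)\<^sup>2 + (cmod r)\<^sup>2 = 1"
    and "2 * cmod (p\<^sup>2 + q * r) = cmod (exp (2 * \<i> * \<beta>) * (sin \<phi>)\<^sup>2 + (cos \<phi>)\<^sup>2 * sin (2 * \<alpha>))"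
proof -
  have "2 * (cmod p)\<^sup>2 = (sin \<phi>)\<^sup>2"
    by (simp add: p_def norm_mult norm_divide power_divide)
  moreover have "(cmod q)\<^sup>2 + (cmod r)\<^sup>2 = (cos \<phi>)\<^sup>2"
  proof -
    have "(cos \<phi> * cos \<alpha>)\<^sup>2 + (cos \<phi> * sin \<alpha>)\<^sup>2 = (cos \<phi>)\<^sup>2 * ((cos \<alpha>)\<^sup>2 + (sin \<alpha>)\<^sup>2)"
      by (simp only: power_mult_distrib distrib_left)
    then show ?thesis
      by (simp only: q_def r_def norm_of_real power2_abs sin_cos_squared_add2 mult_1_right)
  qed
  ultimately show "2 * (cmod p)\<^sup>2 + (cmod q)\<^sup>2 + (cmod r)\<^sup>2 = 1"
    by (simp add: add.assoc)
  have "(complex_of_real (sqrt 2))\<^sup>2 = 2"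
    by (simp flip: of_real_power)
  then have "2 * p\<^sup>2 = exp (2 * \<i> * \<beta>) * (sin \<phi>)\<^sup>2"
    by (simp add: p_def power_divide power_mult_distrib exp_double[symmetric] mult.assoc)
  moreover have "2 * (q * r) = (cos \<phi>)\<^sup>2 * sin (2 * \<alpha>)"
    by (simp add: q_def r_def sin_double power2_eq_square)
  ultimately have "2 * (p\<^sup>2 + q * r) = exp (2 * \<i> * \<beta>) * (sin \<phi>)\<^sup>2 + (cos \<phi>)\<^sup>2 * sin (2 * \<alpha>)"
    by (simp add: distrib_left)
  then show "2 * cmod (p\<^sup>2 + q * r) = cmod (exp (2 * \<i> * \<beta>) * (sin \<phi>)\<^sup>2 + (cos \<phi>)\<^sup>2 * sin (2 * \<alpha>))"
    by (metis norm_mult norm_numeral)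
qed

theorem mainTheorem2:
  fixes \<phi> \<alpha> \<beta> :: real
  assumes "0 \<le> \<phi>" "\<phi> \<le> pi / 2" "0 \<le> \<alpha>" "\<alpha> \<le> pi / 2" "0 \<le> \<beta>" "\<beta> \<le> 2 * pi"
  defines "\<psi>1 \<equiv> scale_st (1 / sqrt 2) (add_st (ket2 0 0) (ket2 1 1))"
    and "\<psi>2 \<equiv> add_st
              (scale_st (cos \<phi>) (add_st (scale_st (cos \<alpha>) (ket2 0 1)) (scale_st (sin \<alpha>) (ket2 1 0))))
              (scale_st (exp (\<i> * \<beta>) * sin \<phi> / sqrt 2) (add_st (ket2 0 0) (scale_st (-1) (ket2 1 1))))"
  shows "\<exists>Va Vb (\<zeta>::real) (\<theta>'::real).
           unitary1 Va \<and> unitary1 Vb \<and> 0 \<le> \<theta>' \<and> \<theta>' \<le> pi / 2 \<and>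
           sin (2 * \<theta>') = cmod (exp (2 * \<i> * \<beta>) * (sin \<phi>)\<^sup>2 + (cos \<phi>)\<^sup>2 * sin (2 * \<alpha>)) \<and>
           apply_op (tensor Va Vb) \<psi>1 = scale_st (1 / sqrt 2) (add_st (ket2 0 1) (ket2 1 0)) \<and>
           apply_op (tensor Va Vb) \<psi>2 =
             scale_st (exp (\<i> * \<zeta>)) (add_st (scale_st (cos \<theta>') (ket2 0 0)) (scale_st (sin \<theta>') (ket2 1 1))) \<and>
           (\<forall>\<nu>1 \<nu>2::real. 0 \<le> \<nu>1 \<and> \<nu>1 \<le> 1 \<and> 0 \<le> \<nu>2 \<and> \<nu>2 \<le> 1 \<and> \<nu>1 + \<nu>2 = 1 \<longrightarrow>
              loc_unitary_equiv
                (add_op (scale_op \<nu>1 (projector \<psi>1)) (scale_op \<nu>2 (projector \<psi>2)))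
                (add_op (scale_op \<nu>2 (projector (add_st (scale_st (cos \<theta>') (ket2 0 0)) (scale_st (sin \<theta>') (ket2 1 1)))))
                        (scale_op \<nu>1 (projector (scale_st (1 / sqrt 2) (add_st (ket2 0 1) (ket2 1 0)))))))"
proof -
  define s where "s = complex_of_real (1 / sqrt 2)"
  define p where "p = exp (\<i> * \<beta>) * sin \<phi> / sqrt 2"
  define q where "q = complex_of_real (cos \<phi> * cos \<alpha>)"
  define r where "r = complex_of_real (cos \<phi> * sin \<alpha>)"
  have \<psi>: "\<psi>1 = state2_of s 0 0 s" "\<psi>2 = state2_of p q r (- p)"
    by (simp_all add: \<psi>1_def \<psi>2_def s_def p_def q_def r_def)
  obtain Va Vb \<theta> \<zeta> where "unitary1 Va" "unitary1 Vb" "0 \<le> \<theta>" "\<theta> \<le> pi / 2"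
    and "sin (2 * \<theta>) = 2 * cmod (p\<^sup>2 + q * r)"
    and bell: "apply_op (tensor Va Vb) (state2_of s 0 0 s) = state2_of 0 s s 0"
    and image: "apply_op (tensor Va Vb) (state2_of p q r (- p)) = state2_of (cis \<zeta> * cos \<theta>) 0 0 (cis \<zeta> * sin \<theta>)"
    using traceless_state_normal_form psi2_coefficients(1)[of \<beta> \<phi> \<alpha>, folded p_def q_def r_def] .
  moreover have "apply_op (tensor Va Vb) \<psi>1 = scale_st (1 / sqrt 2) (add_st (ket2 0 1) (ket2 1 0))"
    using bell by (simp add: \<psi> s_def)
  moreover have "apply_op (tensor Va Vb) \<psi>2 =
      scale_st (exp (\<i> * \<zeta>)) (add_st (scale_st (cos \<theta>) (ket2 0 0)) (scale_st (sin \<theta>) (ket2 1 1)))"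
    using image by (simp add: \<psi> cis_conv_exp)
  moreover have "exp (\<i> * \<zeta>) * cnj (exp (\<i> * \<zeta>)) = 1"
    by (simp flip: cis_conv_exp add: cis_cnj cis_mult)
  ultimately show ?thesis
    using psi2_coefficients(2)[of \<beta> \<phi> \<alpha>, folded p_def q_def r_def] loc_unitary_equiv_mixture by metis
qed

end
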